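(* Let $P$ be a CSP instance. The procedure EnumSolutions, applied to $P$, returns exactly $\mathsf{sol}(P)$.
   Context: Each variable $v$ has a domain $D(v)$; an assignment of a set of variables $W$ is a map $\theta$ with $\theta(v)\in D(v)$ for $v\in W$; $\theta|_X$ denotes restriction, and the assignment of the empty set of variables is $\bot$. A global constraint $e[\delta]$ consists of a polynomial-time algorithm $e$ together with a description $\delta$ specifying a scope $\mathcal V(\delta)$; it maps assignments of $\mathcal V(\delta)$ to $\{0,1\}$, and $\theta\in e[\delta]$ means $e[\delta](\theta)=1$. A CSP instance is $\langle V,C\rangle$ with $V$ a finite set of variables and $C$ a set of global constraints with scopes contained in $V$; a solution is an assignment $\theta$ of $V$ with $\theta|_{\mathcal V(\delta)}\in e[\delta]$ for all $e[\delta]\in C$, and $\mathsf{sol}(P)$ is the set of solutions. For $X\subseteq\mathcal V(\delta)$, $\mathsf{pj}_X(e[\delta])$ is the constraint on $X$ satisfied by $\mu$ iff some $\theta\in e[\delta]$ has $\theta|_X=\mu$; for $X\subseteq V$, $\mathsf{pj}_X(P)=\langle X,C'\rangle$ where $C'$ is the least set containing $\mathsf{pj}_{X\cap\mathcal V(\delta)}(e[\delta])$ for every $e[\delta]\in C$ with $X\cap\mathcal V(\delta)\ne\emptyset$. The procedure EnumSolutions$(P)$ for $P=\langle V,C\rangle$: if $V=\emptyset$, return $\{\bot\}$; otherwise pick some variable $w\in V$, recursively compute $\Theta=$ EnumSolutions$(\mathsf{pj}_{V\setminus\{w\}}(P))$, and return the set of all assignments $\theta\cup\{w\mapsto a\}$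 with $\theta\in\Theta$ and $a\in D(w)$ that are solutions of $P$. *)

theory Defs
  imports Main
begin

type_synonym ('v,'a) assignment = "'v \<rightharpoonup> 'a"

text \<open>A global constraint: its scope together with the (decision) predicate on
  assignments of the scope.\<close>
type_synonym ('v,'a) constr = "'v set \<times> (('v,'a) assignment \<Rightarrow> bool)"

type_synonym ('v,'a) csp = "'v set \<times> ('v,'a) constr set"

definition is_assign :: "('v \<Rightarrow> 'a set) \<Rightarrow> 'v set \<Rightarrow> ('v,'a) assignment \<Rightarrow> bool" where
  "is_assign D W \<theta> \<longleftrightarrow> dom \<theta> = W \<and> (\<forall>v\<in>W. the (\<theta> v) \<in> D v)"

definition wf_csp :: "('v,'a) csp \<Rightarrow> bool" where
  "wf_csp P \<longleftrightarrow> finite (fst P) \<and> (\<forall>c\<in>snd P. fst c \<subseteq> fst P)"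

definition sol :: "('v \<Rightarrow> 'a set) \<Rightarrow> ('v,'a) csp \<Rightarrow> ('v,'a) assignment set" where
  "sol D P = {\<theta>. is_assign D (fst P) \<theta> \<and> (\<forall>c\<in>snd P. snd c (\<theta> |` fst c))}"

definition pj_constr :: "('v \<Rightarrow> 'a set) \<Rightarrow> 'v set \<Rightarrow> ('v,'a) constr \<Rightarrow> ('v,'a) constr" where
  "pj_constr D X c = (X, \<lambda>\<mu>. \<exists>\<theta>. is_assign D (fst c) \<theta> \<and> snd c \<theta> \<and> \<theta> |` X = \<mu>)"

definition pj :: "('v \<Rightarrow> 'a set) \<Rightarrow> 'v set \<Rightarrow> ('v,'a) csp \<Rightarrow> ('v,'a) csp" where
  "pj D X P = (X, {pj_constr D (X \<inter> fst c) c | c. c \<in> snd P \<and> X \<inter> fst c \<noteq> {}})"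

text \<open>EnumSolutions as a relation: enum_sols D P \<Theta> means that some run of the
  (nondeterministic: the variable w is chosen arbitrarily) procedure on P returns \<Theta>.\<close>
inductive enum_sols :: "('v \<Rightarrow> 'a set) \<Rightarrow> ('v,'a) csp \<Rightarrow> ('v,'a) assignment set \<Rightarrow> bool"
  for D where
  empty: "fst P = {} \<Longrightarrow> enum_sols D P {Map.empty}"
| step: "\<lbrakk>w \<in> fst P; enum_sols D (pj D (fst P - {w}) P) \<Theta>\<rbrakk> \<Longrightarrow>
     enum_sols D P {\<theta>(w \<mapsto> a) | \<theta> a. \<theta> \<in> \<Theta> \<and> a \<in> D w \<and> \<theta>(w \<mapsto> a) \<in> sol D P}"

end

theory Submission
  imports Defs
begin

text \<open>A run of EnumSolutions on P recurses on the projection of P that forgets the chosen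
  variable w. The restriction of a solution of P is a solution of that projection, and every
  solution of P is such a restriction extended by its own value at w; since the extensions are
  finally filtered through the constraints of P itself, the run returns exactly the solutions
  of P. The hypothesis on scopes matters only when P has no variables: then the procedure
  returns the empty assignment without consulting the constraints.\<close>

lemma wf_csp_pj: "wf_csp P \<Longrightarrow> finite X \<Longrightarrow> wf_csp (pj D X P)"
  unfolding wf_csp_def pj_def pj_constr_def by auto

lemma pj_scopes_nonempty: "\<forall>c\<in>snd (pj D X P). fst c \<noteq> {}"
  unfolding pj_def pj_constr_def by auto

lemma is_assign_restrict: "is_assign D V \<theta> \<Longrightarrow> X \<subseteq> V \<Longrightarrow> is_assign D X (\<theta> |` X)"
  unfolding is_assign_def by (auto simp: restrict_map_def split: if_splits)

lemma is_assign_restrict_upd: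
  assumes "is_assign D V \<theta>" and "w \<in> V"
  shows "(\<theta> |` (V - {w}))(w \<mapsto> the (\<theta> w)) = \<theta>"
proof -
  obtain a where a: "\<theta> w = Some a"
    using assms by (auto simp: is_assign_def)
  have "(\<theta> |` (V - {w}))(w \<mapsto> a) = (\<theta> |` V)(w := \<theta> w)"
    using a fun_upd_restrict[of \<theta> V w] by simp
  also have "\<dots> = \<theta> |` V"
    using assms(2) by (metis fun_upd_triv restrict_in)
  also have "\<dots> = \<theta>"
    using assms(1) by (auto simp: is_assign_def restrict_map_def fun_eq_iff)
  finally show ?thesis using a by simp
qed

lemma restrict_in_sol_pj:
  assumes "wf_csp P" and "\<theta> \<in> sol D P" and "X \<subseteq> fst P"
  shows "\<theta> |` X \<in> sol D (pj D X P)"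
proof -
  have \<theta>: "is_assign D (fst P) \<theta>" and sat: "\<forall>c\<in>snd P. snd c (\<theta> |` fst c)"
    using assms(2) by (auto simp: sol_def)
  have "snd c' ((\<theta> |` X) |` fst c')" if c': "c' \<in> snd (pj D X P)" for c'
  proof -
    obtain c where c: "c \<in> snd P" "c' = pj_constr D (X \<inter> fst c) c"
      using c' unfolding pj_def by fastforce
    have "fst c \<subseteq> fst P" using assms(1) c(1) by (auto simp: wf_csp_def)
    then have "is_assign D (fst c) (\<theta> |` fst c)" using is_assign_restrict[OF \<theta>] by blast
    moreover have "(\<theta> |` fst c) |` (X \<inter> fst c) = (\<theta> |` X) |` (X \<inter> fst c)"
      by (auto simp: restrict_map_def fun_eq_iff)
    ultimately show ?thesis using sat c by (auto simp: pj_constr_def)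
  qed
  moreover have "fst (pj D X P) = X" by (simp add: pj_def)
  ultimately show ?thesis using is_assign_restrict[OF \<theta> assms(3)] by (simp add: sol_def)
qed

lemma sol_eq_extensions_of_pj:
  assumes "wf_csp P" and "w \<in> fst P"
  shows "sol D P = {\<theta>(w \<mapsto> a) | \<theta> a. \<theta> \<in> sol D (pj D (fst P - {w}) P) \<and> a \<in> D w
                              \<and> \<theta>(w \<mapsto> a) \<in> sol D P}"
    (is "_ = ?extensions")
proof
  show "?extensions \<subseteq> sol D P" by auto
next
  show "sol D P \<subseteq> ?extensions"
  proof
    fix \<theta> assume \<theta>: "\<theta> \<in> sol D P"
    have assign: "is_assign D (fst P) \<theta>" using \<theta> by (simp add: sol_def)
    note extend = is_assign_restrict_upd[OF assign assms(2)]
    show "\<theta> \<in> ?extensions"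
    proof (intro CollectI exI conjI)
      show "\<theta> = (\<theta> |` (fst P - {w}))(w \<mapsto> the (\<theta> w))" using extend by simp
      show "\<theta> |` (fst P - {w}) \<in> sol D (pj D (fst P - {w}) P)"
        using restrict_in_sol_pj[OF assms(1) \<theta>] by simp
      show "the (\<theta> w) \<in> D w" using assign assms(2) by (simp add: is_assign_def)
      show "(\<theta> |` (fst P - {w}))(w \<mapsto> the (\<theta> w)) \<in> sol D P" using extend \<theta> by simp
    qed
  qed
qed

lemma enum_sols_eq_sol:
  "enum_sols D P \<Theta> \<Longrightarrow> wf_csp P \<Longrightarrow> \<forall>c\<in>snd P. fst c \<noteq> {} \<Longrightarrow> \<Theta> = sol D P"
proof (induction rule: enum_sols.induct)
  case (empty P)
  then have "snd P = {}" by (auto simp: wf_csp_def)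
  with empty.hyps show ?case by (auto simp: sol_def is_assign_def)
next
  case (step w P \<Theta>)
  have "finite (fst P - {w})" using step.prems by (auto simp: wf_csp_def)
  then have "\<Theta> = sol D (pj D (fst P - {w}) P)"
    using step.IH wf_csp_pj[OF step.prems(1)] pj_scopes_nonempty by blast
  then show ?case using sol_eq_extensions_of_pj[OF step.prems(1) step.hyps(1)] by simp
qed

lemma enum_sols_exists: "finite (fst P) \<Longrightarrow> \<exists>\<Theta>. enum_sols D P \<Theta>"
proof (induction "card (fst P)" arbitrary: P)
  case 0
  then show ?case using enum_sols.empty by fastforce
next
  case (Suc n)
  then obtain w where w: "w \<in> fst P" by fastforce
  let ?Q = "pj D (fst P - {w}) P"
  have "card (fst ?Q) = n" and "finite (fst ?Q)"
    using Suc.hyps(2) Suc.prems w by (simp_all add: pj_def)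
  then obtain \<Theta> where "enum_sols D ?Q \<Theta>" using Suc.hyps(1) by blast
  then show ?case using enum_sols.step[OF w] by blast
qed

theorem theorem4:
  fixes D :: "'v \<Rightarrow> 'a set" and P :: "('v,'a) csp"
  assumes "wf_csp P"
    and "\<forall>c\<in>snd P. fst c \<noteq> {}"
  shows "(\<exists>\<Theta>. enum_sols D P \<Theta>) \<and> (\<forall>\<Theta>. enum_sols D P \<Theta> \<longrightarrow> \<Theta> = sol D P)"
proof -
  have "finite (fst P)" using assms(1) by (simp add: wf_csp_def)
  then show ?thesis using enum_sols_exists enum_sols_eq_sol assms by blast
qed

end
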